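(* Let $P$ be a Markov kernel on a finite set $\Omega$ (in the paper, a coordinate-replacement kernel restricted to its invariant set $\Omega$), let $G\subseteq\Omega$, and let $K_G(x,y)=P(x,y)\mathbf 1_{\{x,y\in G\}}$ for $x,y\in G$. For $x\in\Omega$ and integer $s\ge0$, let $\alpha^x_s=\delta_xP^s$, $\alpha^x_{s,G}(A)=\alpha^x_s(A\cap G)$, $\widetilde\alpha^x_{s,t}=\alpha^x_se^{t(P-I)}$ and $\lambda^x_{s,t}=\alpha^x_{s,G}e^{t(K_G-I)}$. Then for every integer $s\ge0$, integer $L\ge1$ and $t\ge0$, \[ \|\widetilde\alpha^x_{s,t}-\lambda^x_{s,t}\|_{\mathrm{TV}}\le\mathbb P_x(\exists\,u\in\{0,1,\dots,L\}:X_{s+u}\notin G)+\mathbb P(\operatorname{Poi}(t)>L), \] and the same right-hand side also bounds $1-\lambda^x_{s,t}(G)$.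
   Context: $(X_t)_{t\ge0}$ is the discrete-time chain with kernel $P$, with law $\mathbb P_x$ when started at $x$. $\operatorname{Poi}(t)$ is a Poisson random variable with mean $t$. $\lambda^x_{s,t}$ is a subprobability measure on $G$; the total variation distance between (sub)probability measures is $\|\nu-\lambda\|_{\mathrm{TV}}=\sup_A|\nu(A)-\lambda(A)|$. *)

theory Defs
  imports "HOL-Analysis.Analysis"
begin

text \<open>The finite state space Omega is the universe of a finite type 'a.
  (Sub)probability measures on Omega are represented by their point masses
  'a \<Rightarrow> real; kernels/matrices by 'a \<Rightarrow> 'a \<Rightarrow> real.\<close>

definition markov_kernel :: "('a::finite \<Rightarrow> 'a \<Rightarrow> real) \<Rightarrow> bool" where
  "markov_kernel P \<longleftrightarrow> (\<forall>x y. 0 \<le> P x y) \<and> (\<forall>x. (\<Sum>y\<in>UNIV. P x y) = 1)"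

definition vmul :: "('a::finite \<Rightarrow> real) \<Rightarrow> ('a \<Rightarrow> 'a \<Rightarrow> real) \<Rightarrow> ('a \<Rightarrow> real)" where
  "vmul mu M = (\<lambda>y. \<Sum>x\<in>UNIV. mu x * M x y)"

definition vmul_pow :: "('a::finite \<Rightarrow> real) \<Rightarrow> ('a \<Rightarrow> 'a \<Rightarrow> real) \<Rightarrow> nat \<Rightarrow> ('a \<Rightarrow> real)" where
  "vmul_pow mu M n = ((\<lambda>nu. vmul nu M) ^^ n) mu"

definition vmul_exp :: "('a::finite \<Rightarrow> real) \<Rightarrow> ('a \<Rightarrow> 'a \<Rightarrow> real) \<Rightarrow> ('a \<Rightarrow> real)" where
  "vmul_exp mu M = (\<lambda>y. \<Sum>n. vmul_pow mu M n y / fact n)"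

definition dirac :: "'a \<Rightarrow> 'a \<Rightarrow> real" where
  "dirac x = (\<lambda>y. if y = x then 1 else 0)"

definition meas :: "('a::finite \<Rightarrow> real) \<Rightarrow> 'a set \<Rightarrow> real" where
  "meas mu A = (\<Sum>y\<in>A. mu y)"

definition tv_dist :: "('a::finite \<Rightarrow> real) \<Rightarrow> ('a \<Rightarrow> real) \<Rightarrow> real" where
  "tv_dist nu la = (SUP A\<in>(UNIV :: 'a set set). \<bar>meas nu A - meas la A\<bar>)"

definition alpha :: "('a::finite \<Rightarrow> 'a \<Rightarrow> real) \<Rightarrow> 'a \<Rightarrow> nat \<Rightarrow> ('a \<Rightarrow> real)" where
  "alpha P x s = vmul_pow (dirac x) P s"

definition alphaG :: "('a::finite \<Rightarrow> 'a \<Rightarrow> real) \<Rightarrow> 'a set \<Rightarrow> 'a \<Rightarrow> nat \<Rightarrow> ('a \<Rightarrow> real)" where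
  "alphaG P G x s = (\<lambda>y. if y \<in> G then alpha P x s y else 0)"

text \<open>K_G(x,y) = P(x,y) 1_{x,y \<in> G}, a matrix indexed by G (extended by 0 outside G).\<close>
definition KG :: "('a \<Rightarrow> 'a \<Rightarrow> real) \<Rightarrow> 'a set \<Rightarrow> 'a \<Rightarrow> 'a \<Rightarrow> real" where
  "KG P G = (\<lambda>x y. if x \<in> G \<and> y \<in> G then P x y else 0)"

definition idG :: "'a set \<Rightarrow> 'a \<Rightarrow> 'a \<Rightarrow> real" where
  "idG G = (\<lambda>x y. if x \<in> G \<and> x = y then 1 else 0)"

definition alpha_tilde :: "('a::finite \<Rightarrow> 'a \<Rightarrow> real) \<Rightarrow> 'a \<Rightarrow> nat \<Rightarrow> real \<Rightarrow> ('a \<Rightarrow> real)" where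
  "alpha_tilde P x s t = vmul_exp (alpha P x s) (\<lambda>u v. t * (P u v - (if u = v then 1 else 0)))"

definition lam :: "('a::finite \<Rightarrow> 'a \<Rightarrow> real) \<Rightarrow> 'a set \<Rightarrow> 'a \<Rightarrow> nat \<Rightarrow> real \<Rightarrow> ('a \<Rightarrow> real)" where
  "lam P G x s t = vmul_exp (alphaG P G x s) (\<lambda>u v. t * (KG P G u v - idG G u v))"

text \<open>Law of the chain started at x: the probability that the path
  (X_0,...,X_n) = (x # xs) is prod_{i<n} P(X_i, X_{i+1}). The probability of an
  event E on paths of length n+1 started at x.\<close>
definition path_prob :: "('a::finite \<Rightarrow> 'a \<Rightarrow> real) \<Rightarrow> 'a \<Rightarrow> nat \<Rightarrow> ('a list \<Rightarrow> bool) \<Rightarrow> real" where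
  "path_prob P x n E = (\<Sum>xs\<in>{xs. length xs = n \<and> E (x # xs)}.
       \<Prod>i<n. P ((x # xs) ! i) ((x # xs) ! Suc i))"

definition poisson_tail :: "real \<Rightarrow> nat \<Rightarrow> real" where
  "poisson_tail t L = (\<Sum>k. if k > L then exp (- t) * t ^ k / fact k else 0)"

end

theory Submission
  imports Defs
begin

(* Both measures are Poisson(t) mixtures: since e^{t(M - I)} = e^{-t} e^{tM} whenever I acts as the
   identity on the orbit of the initial measure, alpha~ = sum_k pi_t(k) alpha_s P^k and
   lambda = sum_k pi_t(k) alpha_{s,G} K_G^k, where pi_t is the Poisson(t) law and I_G is harmless because
   alpha_{s,G} K_G^k is carried by G. As 0 <= K_G <= P entrywise, alpha_{s,G} K_G^k <= alpha_s P^k, so the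
   total variation distance equals the lost mass 1 - lambda(G) = sum_k pi_t(k) (1 - |alpha_{s,G} K_G^k|).
   The mass |alpha_{s,G} K_G^k| is the probability that the chain stays in G at times s, ..., s + k. It
   is nonincreasing in k, so the terms with k <= L contribute at most the probability of leaving G
   during s, ..., s + L, and those with k > L at most P(Poi(t) > L). *)

lemma vmul_pow_0 [simp]: "vmul_pow mu M 0 = mu"
  by (simp add: vmul_pow_def)

lemma vmul_pow_Suc: "vmul_pow mu M (Suc n) = vmul (vmul_pow mu M n) M"
  by (simp add: vmul_pow_def)

lemma vmul_linear_combination:
  fixes f :: "'b \<Rightarrow> 'a::finite \<Rightarrow> real"
  shows "vmul (\<lambda>y. \<Sum>j\<in>S. c j * f j y) M = (\<lambda>y. \<Sum>j\<in>S. c j * vmul (f j) M y)"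
  unfolding vmul_def
  by (auto simp: sum_distrib_left sum_distrib_right mult.assoc intro!: ext sum.swap)

lemma vmul_scaled_diff:
  "vmul mu (\<lambda>u v. t * (Q u v - I u v)) y = t * (vmul mu Q y - vmul mu I y)"
  unfolding vmul_def by (simp add: sum_distrib_left sum_subtractf algebra_simps)

lemma sum_binomial_Suc:
  fixes f :: "nat \<Rightarrow> real"
  shows "(\<Sum>j\<le>Suc n. real (Suc n choose j) * a^(Suc n - j) * f j)
       = (\<Sum>j\<le>n. real (n choose j) * a^(n - j) * (f (Suc j) + a * f j))"
proof -
  have "(\<Sum>j\<le>Suc n. real (Suc n choose j) * a^(Suc n - j) * f j)
     = a^(Suc n) * f 0 + (\<Sum>j\<le>n. real (n choose j) * a^(n - j) * f (Suc j))
        + (\<Sum>j\<le>n. real (n choose Suc j) * a^(n - j) * f (Suc j))"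
    by (subst sum.atMost_Suc_shift) (simp add: sum.distrib algebra_simps)
  also have "(\<Sum>j\<le>n. real (n choose Suc j) * a^(n - j) * f (Suc j))
      = (\<Sum>j\<le>n. a * (real (n choose j) * a^(n - j) * f j)) - a^(Suc n) * f 0"
  proof -
    have "(\<Sum>j\<le>n. real (n choose Suc j) * a^(n - j) * f (Suc j))
        = (\<Sum>j\<le>Suc n. real (n choose j) * a^(Suc n - j) * f j) - a^(Suc n) * f 0"
      by (subst sum.atMost_Suc_shift) simp
    also have "(\<Sum>j\<le>Suc n. real (n choose j) * a^(Suc n - j) * f j)
        = (\<Sum>j\<le>n. a * (real (n choose j) * a^(n - j) * f j))"
      by (simp add: sum_distrib_left Suc_diff_le mult_ac)
    finally show ?thesis .
  qed
  finally show ?thesis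
    by (simp add: sum.distrib algebra_simps sum_distrib_left)
qed

lemma vmul_pow_scaled_diff_binomial:
  assumes I_id: "\<And>n. vmul (vmul_pow mu Q n) I = vmul_pow mu Q n"
  shows "vmul_pow mu (\<lambda>u v. t * (Q u v - I u v)) n y
     = (\<Sum>j\<le>n. real (n choose j) * (-t)^(n-j) * (t^j * vmul_pow mu Q j y))"
proof (induction n arbitrary: y)
  case 0
  then show ?case by simp
next
  case (Suc n)
  let ?c = "\<lambda>j. real (n choose j) * (-t)^(n-j) * t^j"
  have IH: "vmul_pow mu (\<lambda>u v. t * (Q u v - I u v)) n = (\<lambda>y. \<Sum>j\<le>n. ?c j * vmul_pow mu Q j y)"
    using Suc.IH by (auto intro!: ext sum.cong simp: mult.assoc)
  have "vmul_pow mu (\<lambda>u v. t * (Q u v - I u v)) (Suc n) y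
      = t * ((\<Sum>j\<le>n. ?c j * vmul_pow mu Q (Suc j) y) - (\<Sum>j\<le>n. ?c j * vmul_pow mu Q j y))"
    unfolding vmul_pow_Suc vmul_scaled_diff IH vmul_linear_combination
    by (simp add: I_id vmul_pow_Suc sum_distrib_left sum_subtractf algebra_simps)
  also have "\<dots> = (\<Sum>j\<le>n. real (n choose j) * (-t)^(n-j) *
        (t^(Suc j) * vmul_pow mu Q (Suc j) y + (-t) * (t^j * vmul_pow mu Q j y)))"
    by (simp add: sum_distrib_left sum_subtractf[symmetric] algebra_simps)
  also have "\<dots> = (\<Sum>j\<le>Suc n. real (Suc n choose j) * (-t)^(Suc n-j) * (t^j * vmul_pow mu Q j y))"
    by (rule sum_binomial_Suc[symmetric])
  finally show ?case .
qed

definition poisson_weight :: "real \<Rightarrow> nat \<Rightarrow> real" where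
  "poisson_weight t k = exp (-t) * t^k / fact k"

definition poisson_mix :: "real \<Rightarrow> (nat \<Rightarrow> 'a \<Rightarrow> real) \<Rightarrow> 'a \<Rightarrow> real" where
  "poisson_mix t D = (\<lambda>y. \<Sum>k. poisson_weight t k * D k y)"

lemma poisson_weight_nonneg: "0 \<le> t \<Longrightarrow> 0 \<le> poisson_weight t k"
  by (simp add: poisson_weight_def)

lemma poisson_weight_sums: "poisson_weight t sums 1"
proof -
  have "(\<lambda>k. t^k / fact k) sums exp t"
    using exp_converges[of t] by (simp add: real_scaleR_def divide_inverse mult.commute)
  then have "(\<lambda>k. exp (-t) * (t^k / fact k)) sums (exp (-t) * exp t)"
    by (rule sums_mult)
  then show ?thesis
    by (simp add: poisson_weight_def[abs_def] exp_add[symmetric])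
qed

lemma summable_exp_bounded:
  fixes c :: "nat \<Rightarrow> real"
  assumes "\<And>k. \<bar>c k\<bar> \<le> C"
  shows "summable (\<lambda>k. t^k * c k / fact k)"
proof (rule summable_comparison_test'[of "\<lambda>k. C * (\<bar>t\<bar>^k / fact k)"])
  show "summable (\<lambda>k. C * (\<bar>t\<bar>^k / fact k))"
    using summable_exp[of "\<bar>t\<bar>"] by (intro summable_mult) (simp add: divide_inverse mult.commute)
  fix k
  have "\<bar>t\<bar>^k * \<bar>c k\<bar> \<le> \<bar>t\<bar>^k * C"
    using assms[of k] by (intro mult_left_mono) auto
  then show "norm (t^k * c k / fact k) \<le> C * (\<bar>t\<bar>^k / fact k)"
    by (auto simp: abs_mult power_abs field_simps intro!: divide_right_mono)
qed

lemma summable_poisson_weight_bounded: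
  fixes c :: "nat \<Rightarrow> real"
  assumes "\<And>k. \<bar>c k\<bar> \<le> C"
  shows "summable (\<lambda>k. poisson_weight t k * c k)"
proof -
  have "summable (\<lambda>k. exp (-t) * (t^k * c k / fact k))"
    by (intro summable_mult summable_exp_bounded[OF assms])
  then show ?thesis
    by (simp add: poisson_weight_def algebra_simps)
qed

lemma vmul_exp_eq_poisson_mix:
  assumes I_id: "\<And>n. vmul (vmul_pow mu Q n) I = vmul_pow mu Q n"
    and bounded: "\<And>k y. \<bar>vmul_pow mu Q k y\<bar> \<le> C"
  shows "vmul_exp mu (\<lambda>u v. t * (Q u v - I u v)) = poisson_mix t (vmul_pow mu Q)"
proof
  fix y
  define a where "a = (\<lambda>i. t^i * vmul_pow mu Q i y / fact i)"
  define b where "b = (\<lambda>i. (-t)^i / fact i :: real)"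
  have summable_a: "summable (\<lambda>k. norm (a k))"
    using summable_exp_bounded[of "\<lambda>k. \<bar>vmul_pow mu Q k y\<bar>" C "\<bar>t\<bar>"] bounded
    by (simp add: a_def abs_mult power_abs)
  have summable_b: "summable (\<lambda>k. norm (b k))"
    using summable_exp[of "\<bar>t\<bar>"] by (simp add: b_def abs_mult power_abs divide_inverse mult.commute)
  have b_sum: "(\<Sum>k. b k) = exp (-t)"
    using exp_converges[of "-t"] by (simp add: b_def sums_iff divide_inverse mult.commute)
  \<comment> \<open>The binomial expansion of the powers is the Cauchy product of the two exponential series.\<close>
  have "(\<Sum>i\<le>k. a i * b (k - i)) = vmul_pow mu (\<lambda>u v. t * (Q u v - I u v)) k y / fact k" for k
    by (auto simp: vmul_pow_scaled_diff_binomial[OF I_id] sum_divide_distrib a_def b_def binomial_fact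
        intro!: sum.cong)
  then have "(\<lambda>k. vmul_pow mu (\<lambda>u v. t * (Q u v - I u v)) k y / fact k) sums ((\<Sum>k. a k) * exp (-t))"
    using Cauchy_product_sums[OF summable_a summable_b] by (simp add: b_sum)
  moreover have "(\<Sum>k. a k) * exp (-t) = (\<Sum>k. poisson_weight t k * vmul_pow mu Q k y)"
    using suminf_mult2[OF summable_norm_cancel[OF summable_a], of "exp (-t)"]
    by (simp add: a_def poisson_weight_def algebra_simps)
  ultimately show "vmul_exp mu (\<lambda>u v. t * (Q u v - I u v)) y = poisson_mix t (vmul_pow mu Q) y"
    by (simp add: vmul_exp_def poisson_mix_def sums_iff)
qed

lemma markov_kernel_nonneg: "markov_kernel P \<Longrightarrow> 0 \<le> P u v"
  by (simp add: markov_kernel_def)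

lemma markov_kernel_row_sum: "markov_kernel P \<Longrightarrow> (\<Sum>v\<in>UNIV. P u v) = 1"
  by (simp add: markov_kernel_def)

lemma le_meas_UNIV:
  fixes mu :: "'a::finite \<Rightarrow> real"
  assumes "\<And>y. 0 \<le> mu y"
  shows "mu y \<le> meas mu UNIV"
  unfolding meas_def using assms by (intro member_le_sum) auto

lemma meas_vmul:
  fixes mu :: "'a::finite \<Rightarrow> real"
  shows "meas (vmul mu K) UNIV = (\<Sum>u\<in>UNIV. mu u * (\<Sum>v\<in>UNIV. K u v))"
  unfolding meas_def vmul_def sum_distrib_left by (rule sum.swap)

lemma vmul_pow_nonneg:
  fixes mu :: "'a::finite \<Rightarrow> real"
  assumes "\<And>y. 0 \<le> mu y" and "\<And>u v. 0 \<le> K u v"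
  shows "0 \<le> vmul_pow mu K k y"
proof (induction k arbitrary: y)
  case (Suc k)
  then show ?case
    using assms by (simp add: vmul_pow_Suc vmul_def sum_nonneg)
qed (simp add: assms)

lemma meas_vmul_pow_markov:
  fixes mu :: "'a::finite \<Rightarrow> real"
  assumes "markov_kernel P"
  shows "meas (vmul_pow mu P k) UNIV = meas mu UNIV"
  by (induction k) (simp_all add: vmul_pow_Suc meas_vmul markov_kernel_row_sum[OF assms], 
      simp add: meas_def)

lemma meas_vmul_pow_Suc_le:
  fixes mu :: "'a::finite \<Rightarrow> real"
  assumes "\<And>y. 0 \<le> mu y" and "\<And>u v. 0 \<le> K u v" and "\<And>u. (\<Sum>v\<in>UNIV. K u v) \<le> 1"
  shows "meas (vmul_pow mu K (Suc k)) UNIV \<le> meas (vmul_pow mu K k) UNIV"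
proof -
  have "meas (vmul_pow mu K (Suc k)) UNIV = (\<Sum>u\<in>UNIV. vmul_pow mu K k u * (\<Sum>v\<in>UNIV. K u v))"
    by (simp add: vmul_pow_Suc meas_vmul)
  also have "\<dots> \<le> (\<Sum>u\<in>UNIV. vmul_pow mu K k u)"
    using assms vmul_pow_nonneg[OF assms(1,2)] by (intro sum_mono mult_left_le) auto
  finally show ?thesis
    by (simp add: meas_def)
qed

lemma vmul_pow_mono:
  fixes mu nu :: "'a::finite \<Rightarrow> real"
  assumes "\<And>y. 0 \<le> mu y" and "\<And>y. mu y \<le> nu y"
    and "\<And>u v. 0 \<le> K u v" and "\<And>u v. K u v \<le> P u v"
  shows "vmul_pow mu K k y \<le> vmul_pow nu P k y"
proof (induction k arbitrary: y)
  case (Suc k)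
  show ?case
    unfolding vmul_pow_Suc vmul_def
    using Suc vmul_pow_nonneg[OF assms(1,3)] assms(3,4)
    by (intro sum_mono mult_mono') auto
qed (simp add: assms)

lemma meas_poisson_mix:
  fixes D :: "nat \<Rightarrow> 'a::finite \<Rightarrow> real"
  assumes "\<And>k y. \<bar>D k y\<bar> \<le> C"
  shows "meas (poisson_mix t D) A = (\<Sum>k. poisson_weight t k * meas (D k) A)"
proof -
  have "meas (poisson_mix t D) A = (\<Sum>k. \<Sum>y\<in>A. poisson_weight t k * D k y)"
    unfolding meas_def poisson_mix_def
    by (rule suminf_sum[symmetric]) (rule summable_poisson_weight_bounded[OF assms])
  then show ?thesis
    by (simp add: meas_def sum_distrib_left)
qed

lemma poisson_mix_mono:
  fixes D D' :: "nat \<Rightarrow> 'a \<Rightarrow> real"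
  assumes "0 \<le> t" and "\<And>k. D k y \<le> D' k y"
    and "\<And>k y. \<bar>D k y\<bar> \<le> C" and "\<And>k y. \<bar>D' k y\<bar> \<le> C"
  shows "poisson_mix t D y \<le> poisson_mix t D' y"
  unfolding poisson_mix_def
  using assms by (intro suminf_le mult_left_mono poisson_weight_nonneg summable_poisson_weight_bounded)

lemma tv_dist_dominated:
  fixes nu la :: "'a::finite \<Rightarrow> real"
  assumes "\<And>y. la y \<le> nu y"
  shows "tv_dist nu la = meas nu UNIV - meas la UNIV"
  unfolding tv_dist_def
proof (rule cSup_eq_maximum)
  have abs_diff: "\<bar>meas nu A - meas la A\<bar> = (\<Sum>y\<in>A. nu y - la y)" for A
    using assms by (simp add: meas_def sum_subtractf[symmetric] sum_nonneg)
  moreover have "(\<Sum>y\<in>A. nu y - la y) \<le> (\<Sum>y\<in>UNIV. nu y - la y)" for A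
    using assms by (intro sum_mono2) auto
  ultimately show "z \<le> meas nu UNIV - meas la UNIV"
    if "z \<in> (\<lambda>A. \<bar>meas nu A - meas la A\<bar>) ` UNIV" for z
    using that by (auto simp: meas_def sum_subtractf)
  show "meas nu UNIV - meas la UNIV \<in> (\<lambda>A. \<bar>meas nu A - meas la A\<bar>) ` UNIV"
    using abs_diff[of UNIV] by (intro image_eqI[of _ _ UNIV]) (simp_all add: meas_def sum_subtractf)
qed

lemma poisson_tail_eq: "poisson_tail t L = (\<Sum>k. if L < k then poisson_weight t k else 0)"
  unfolding poisson_tail_def poisson_weight_def ..

lemma poisson_deficit_le:
  fixes m :: "nat \<Rightarrow> real"
  assumes "0 \<le> t" and m_nonneg: "\<And>k. 0 \<le> m k" and m_le_1: "\<And>k. m k \<le> 1"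
    and m_decr: "\<And>k. m (Suc k) \<le> m k"
  shows "(\<Sum>k. poisson_weight t k * (1 - m k)) \<le> (1 - m L) + poisson_tail t L"
proof -
  let ?p = "poisson_weight t"
  have p_nonneg: "0 \<le> ?p k" for k
    using \<open>0 \<le> t\<close> by (rule poisson_weight_nonneg)
  have summable_tail: "summable (\<lambda>k. if L < k then ?p k else 0)"
    using summable_poisson_weight_bounded[of "\<lambda>k. if L < k then 1 else 0" 1 t]
    by (simp add: if_distrib cong: if_cong)
  have summable_const: "summable (\<lambda>k. ?p k * (1 - m L))"
    using poisson_weight_sums by (intro summable_mult2) (rule sums_summable)
  have "(\<Sum>k. ?p k * (1 - m k)) \<le> (\<Sum>k. ?p k * (1 - m L) + (if L < k then ?p k else 0))"
  proof (rule suminf_le)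
    show "?p k * (1 - m k) \<le> ?p k * (1 - m L) + (if L < k then ?p k else 0)" for k
    proof (cases "L < k")
      case True
      have "?p k * (1 - m k) \<le> ?p k"
        using m_nonneg[of k] p_nonneg[of k] by (simp add: mult_left_le)
      moreover have "0 \<le> ?p k * (1 - m L)"
        using m_le_1[of L] p_nonneg[of k] by simp
      ultimately show ?thesis
        using True by simp
    next
      case False
      then have "m L \<le> m k"
        using lift_Suc_antimono_le[of m, OF m_decr] by simp
      then show ?thesis
        using False p_nonneg[of k] by (simp add: mult_left_mono)
    qed
    show "summable (\<lambda>k. ?p k * (1 - m k))"
      using m_nonneg m_le_1 by (intro summable_poisson_weight_bounded[of _ 1]) (simp add: abs_le_iff)
    show "summable (\<lambda>k. ?p k * (1 - m L) + (if L < k then ?p k else 0))"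
      by (intro summable_add summable_const summable_tail)
  qed
  also have "\<dots> = (\<Sum>k. ?p k * (1 - m L)) + poisson_tail t L"
    unfolding poisson_tail_eq by (rule suminf_add[OF summable_const summable_tail, symmetric])
  also have "(\<Sum>k. ?p k * (1 - m L)) = 1 - m L"
    using sums_mult2[OF poisson_weight_sums[of t], of "1 - m L"] by (simp add: sums_iff)
  finally show ?thesis .
qed

context
  fixes t :: real and D E :: "nat \<Rightarrow> 'a::finite \<Rightarrow> real"
  assumes t_nonneg: "0 \<le> t"
    and E_nonneg: "\<And>k y. 0 \<le> E k y" and E_le_D: "\<And>k y. E k y \<le> D k y"
    and meas_D: "\<And>k. meas (D k) UNIV = 1"
begin

lemma abs_dominated_le_1: "\<bar>D k y\<bar> \<le> 1" "\<bar>E k y\<bar> \<le> 1"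
proof -
  have "D k y \<le> 1"
    using le_meas_UNIV[of "D k" y] E_nonneg E_le_D meas_D order.trans by metis
  then show "\<bar>D k y\<bar> \<le> 1" "\<bar>E k y\<bar> \<le> 1"
    using E_nonneg[of k y] E_le_D[of k y] by linarith+
qed

lemma tv_dist_poisson_mix_dominated:
  "tv_dist (poisson_mix t D) (poisson_mix t E) = 1 - meas (poisson_mix t E) UNIV"
proof -
  have "meas (poisson_mix t D) UNIV = 1"
    using poisson_weight_sums[of t]
    by (simp add: meas_poisson_mix[OF abs_dominated_le_1(1)] meas_D sums_iff)
  moreover have "poisson_mix t E y \<le> poisson_mix t D y" for y
    by (rule poisson_mix_mono[OF t_nonneg E_le_D abs_dominated_le_1(2,1)])
  ultimately show ?thesis
    by (simp add: tv_dist_dominated)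
qed

lemma poisson_mix_mass_deficit_le:
  assumes meas_E_decr: "\<And>k. meas (E (Suc k)) UNIV \<le> meas (E k) UNIV"
  shows "1 - meas (poisson_mix t E) UNIV \<le> 1 - meas (E L) UNIV + poisson_tail t L"
proof -
  let ?p = "poisson_weight t" and ?m = "\<lambda>k. meas (E k) UNIV"
  have m_nonneg: "0 \<le> ?m k" for k
    by (simp add: meas_def sum_nonneg E_nonneg)
  have m_le_1: "?m k \<le> 1" for k
    using meas_D[of k] E_le_D by (simp add: meas_def) (metis sum_mono)
  have "1 - meas (poisson_mix t E) UNIV = (\<Sum>k. ?p k) - (\<Sum>k. ?p k * ?m k)"
    using poisson_weight_sums[of t] by (simp add: meas_poisson_mix[OF abs_dominated_le_1(2)] sums_iff)
  also have "\<dots> = (\<Sum>k. ?p k - ?p k * ?m k)"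
    using m_nonneg m_le_1
    by (intro suminf_diff sums_summable[OF poisson_weight_sums] summable_poisson_weight_bounded[of ?m 1])
      (simp add: abs_le_iff)
  also have "\<dots> = (\<Sum>k. ?p k * (1 - ?m k))"
    by (simp add: algebra_simps)
  also have "\<dots> \<le> 1 - ?m L + poisson_tail t L"
    using t_nonneg m_nonneg m_le_1 meas_E_decr by (rule poisson_deficit_le)
  finally show ?thesis .
qed

end

lemma alpha_nonneg: "markov_kernel P \<Longrightarrow> 0 \<le> alpha P x s y"
  unfolding alpha_def by (intro vmul_pow_nonneg) (auto simp: dirac_def markov_kernel_nonneg)

lemma meas_alpha: "markov_kernel P \<Longrightarrow> meas (alpha P x s) UNIV = 1"
  by (simp add: alpha_def meas_vmul_pow_markov) (simp add: meas_def dirac_def)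

lemma KG_nonneg: "markov_kernel P \<Longrightarrow> 0 \<le> KG P G u v"
  by (simp add: KG_def markov_kernel_nonneg)

lemma KG_le: "markov_kernel P \<Longrightarrow> KG P G u v \<le> P u v"
  by (simp add: KG_def markov_kernel_nonneg)

lemma KG_row_sum_le: "markov_kernel P \<Longrightarrow> (\<Sum>v\<in>UNIV. KG P G u v) \<le> 1"
  using sum_mono[of UNIV "KG P G u" "P u"] KG_le markov_kernel_row_sum by metis

lemma alphaG_nonneg: "markov_kernel P \<Longrightarrow> 0 \<le> alphaG P G x s y"
  by (simp add: alphaG_def alpha_nonneg)

lemma alphaG_le: "markov_kernel P \<Longrightarrow> alphaG P G x s y \<le> alpha P x s y"
  by (simp add: alphaG_def alpha_nonneg)

lemma vmul_pow_KG_outside: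
  "y \<notin> G \<Longrightarrow> vmul_pow (alphaG P G x s) (KG P G) k y = 0"
  by (cases k) (simp_all add: alphaG_def vmul_pow_Suc vmul_def KG_def)

lemma vmul_KG:
  assumes "\<And>u. u \<notin> G \<Longrightarrow> mu u = 0"
  shows "vmul mu (KG P G) y = (if y \<in> G then vmul mu P y else 0)"
proof -
  have "mu u * KG P G u y = (if y \<in> G then mu u * P u y else 0)" for u
    using assms[of u] by (auto simp: KG_def)
  then show ?thesis
    by (simp add: vmul_def)
qed

lemma vmul_idG:
  assumes "\<And>u. u \<notin> G \<Longrightarrow> mu u = 0"
  shows "vmul mu (idG G) = mu"
proof
  fix z
  have "mu u * idG G u z = (if u = z then mu z else 0)" for u
    using assms[of u] by (auto simp: idG_def)
  then show "vmul mu (idG G) z = mu z"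
    by (simp add: vmul_def)
qed

lemma vmul_pow_alpha: "vmul_pow (alpha P x s) P k = alpha P x (s + k)"
  by (simp add: alpha_def vmul_pow_def add.commute[of s k] funpow_add)

lemma alpha_le_1: "markov_kernel P \<Longrightarrow> alpha P x s y \<le> 1"
  using le_meas_UNIV[of "alpha P x s" y] by (simp add: alpha_nonneg meas_alpha)

lemma vmul_pow_KG_le_alpha:
  "markov_kernel P \<Longrightarrow> vmul_pow (alphaG P G x s) (KG P G) k y \<le> alpha P x (s + k) y"
  unfolding vmul_pow_alpha[symmetric]
  by (intro vmul_pow_mono alphaG_nonneg alphaG_le KG_nonneg KG_le)

lemma vmul_pow_KG_nonneg:
  "markov_kernel P \<Longrightarrow> 0 \<le> vmul_pow (alphaG P G x s) (KG P G) k y"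
  by (intro vmul_pow_nonneg alphaG_nonneg KG_nonneg)

definition path_weight :: "('a \<Rightarrow> 'a \<Rightarrow> real) \<Rightarrow> 'a \<Rightarrow> 'a list \<Rightarrow> real" where
  "path_weight P x xs = (\<Prod>i<length xs. P ((x # xs) ! i) ((x # xs) ! Suc i))"

lemma path_prob_eq_sum_path_weight:
  "path_prob P x n E = (\<Sum>xs\<in>{xs. length xs = n \<and> E (x # xs)}. path_weight P x xs)"
  unfolding path_prob_def path_weight_def by (intro sum.cong) auto

lemma path_weight_snoc:
  "path_weight P x (ys @ [y]) = path_weight P x ys * P (last (x # ys)) y"
proof -
  have "(\<Prod>i<length ys. P ((x # ys @ [y]) ! i) ((x # ys @ [y]) ! Suc i)) = path_weight P x ys"
    unfolding path_weight_def
    by (intro prod.cong refl) (auto simp: nth_append nth_Cons split: nat.split)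
  moreover have "(x # ys @ [y]) ! length ys = last (x # ys)"
    by (simp add: nth_append last_conv_nth nth_Cons split: nat.split)
  ultimately show ?thesis
    by (simp add: path_weight_def nth_append)
qed

lemma finite_lists_length:
  "finite {xs :: 'a::finite list. length xs = n \<and> Q xs}"
  using finite_lists_length_eq[OF finite_class.finite_UNIV, of n] by (rule finite_subset[rotated]) auto

definition constrained_paths :: "(nat \<Rightarrow> 'a set) \<Rightarrow> 'a \<Rightarrow> nat \<Rightarrow> 'a list set" where
  "constrained_paths C x n = {xs. length xs = n \<and> (\<forall>i\<le>n. (x # xs) ! i \<in> C i)}"

lemma constrained_paths_Suc_last:
  assumes "y \<in> C (Suc n)"
  shows "{xs \<in> constrained_paths C x (Suc n). last (x # xs) = y}
       = (\<lambda>ys. ys @ [y]) ` constrained_paths C x n"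
proof (intro equalityI subsetI)
  fix xs
  assume xs: "xs \<in> {xs \<in> constrained_paths C x (Suc n). last (x # xs) = y}"
  then have len: "length xs = Suc n" and in_C: "\<forall>i\<le>Suc n. (x # xs) ! i \<in> C i"
    and last: "last (x # xs) = y"
    by (auto simp: constrained_paths_def)
  define ys where "ys = butlast xs"
  have "xs \<noteq> []"
    using len by auto
  then have ys: "xs = ys @ [y]"
    using last by (metis append_butlast_last_id last_ConsR ys_def)
  have "length ys = n"
    using len by (simp add: ys_def)
  moreover have "(x # ys) ! i \<in> C i" if "i \<le> n" for i
  proof -
    have "(x # ys) ! i = (x # xs) ! i"
      using that \<open>length ys = n\<close> by (simp add: ys nth_append nth_Cons split: nat.split)
    then show ?thesis
      using in_C that by simp
  qed
  ultimately have "ys \<in> constrained_paths C x n"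
    by (simp add: constrained_paths_def)
  then show "xs \<in> (\<lambda>ys. ys @ [y]) ` constrained_paths C x n"
    by (simp add: ys)
next
  fix xs
  assume "xs \<in> (\<lambda>ys. ys @ [y]) ` constrained_paths C x n"
  then obtain ys where xs: "xs = ys @ [y]" and ys: "length ys = n" "\<forall>i\<le>n. (x # ys) ! i \<in> C i"
    by (auto simp: constrained_paths_def)
  have "(x # ys @ [y]) ! i \<in> C i" if "i \<le> Suc n" for i
    using that assms ys
    by (cases "i = Suc n") (auto simp: nth_append nth_Cons le_Suc_eq split: nat.split)
  then show "xs \<in> {xs \<in> constrained_paths C x (Suc n). last (x # xs) = y}"
    using ys by (simp add: xs constrained_paths_def)
qed

fun constrained_law ::
  "('a::finite \<Rightarrow> 'a \<Rightarrow> real) \<Rightarrow> (nat \<Rightarrow> 'a set) \<Rightarrow> 'a \<Rightarrow> nat \<Rightarrow> 'a \<Rightarrow> real" where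
  "constrained_law P C x 0 = (\<lambda>y. if y = x \<and> x \<in> C 0 then 1 else 0)"
| "constrained_law P C x (Suc n) = (\<lambda>y. if y \<in> C (Suc n) then vmul (constrained_law P C x n) P y else 0)"

lemma finite_constrained_paths: "finite (constrained_paths C (x::'a::finite) n)"
  unfolding constrained_paths_def by (rule finite_lists_length)

lemma constrained_law_eq_sum_paths:
  "constrained_law P C x n y
     = (\<Sum>xs\<in>{xs \<in> constrained_paths C x n. last (x # xs) = y}. path_weight P x xs)"
proof (induction n arbitrary: y)
  case 0
  have "{xs \<in> constrained_paths C x 0. last (x # xs) = y} = (if y = x \<and> x \<in> C 0 then {[]} else {})"
    by (auto simp: constrained_paths_def)
  then show ?case
    by (simp add: path_weight_def)
next
  case (Suc n)
  show ?case
  proof (cases "y \<in> C (Suc n)")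
    case False
    have "last (x # xs) = (x # xs) ! Suc n" if "length xs = Suc n" for xs
      using that by (cases xs) (auto simp: last_conv_nth)
    then have "{xs \<in> constrained_paths C x (Suc n). last (x # xs) = y} = {}"
      using False by (auto simp: constrained_paths_def)
    moreover have "constrained_law P C x (Suc n) y = 0"
      using False by simp
    ultimately show ?thesis
      by (simp only: sum.empty)
  next
    case True
    have last_weight: "(\<Sum>ys\<in>{ys \<in> constrained_paths C x n. last (x # ys) = u}.
          path_weight P x ys * P (last (x # ys)) y) = constrained_law P C x n u * P u y" for u
      by (simp add: Suc.IH sum_distrib_right)
    have "(\<Sum>xs\<in>{xs \<in> constrained_paths C x (Suc n). last (x # xs) = y}. path_weight P x xs)
        = (\<Sum>ys\<in>constrained_paths C x n. path_weight P x ys * P (last (x # ys)) y)"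
      unfolding constrained_paths_Suc_last[of y C n, OF True]
      by (subst sum.reindex) (auto simp: inj_on_def path_weight_snoc)
    also have "\<dots> = (\<Sum>u\<in>UNIV. \<Sum>ys\<in>{ys \<in> constrained_paths C x n. last (x # ys) = u}.
          path_weight P x ys * P (last (x # ys)) y)"
      by (rule sum.group[symmetric]) (auto simp: finite_constrained_paths)
    also have "\<dots> = vmul (constrained_law P C x n) P y"
      by (simp only: last_weight vmul_def)
    finally show ?thesis
      using True by simp
  qed
qed

lemma path_prob_constrained:
  "path_prob P x n (\<lambda>w. \<forall>i\<le>n. w ! i \<in> C i) = meas (constrained_law P C x n) UNIV"
proof -
  have "path_prob P x n (\<lambda>w. \<forall>i\<le>n. w ! i \<in> C i)
      = (\<Sum>xs\<in>constrained_paths C x n. path_weight P x xs)"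
    by (simp add: path_prob_eq_sum_path_weight constrained_paths_def)
  also have "\<dots> = (\<Sum>y\<in>UNIV. \<Sum>xs\<in>{xs \<in> constrained_paths C x n. last (x # xs) = y}.
      path_weight P x xs)"
    by (rule sum.group[symmetric]) (auto simp: finite_constrained_paths)
  finally show ?thesis
    by (simp add: meas_def constrained_law_eq_sum_paths)
qed

lemma constrained_law_unconstrained:
  "(\<And>i. i \<le> n \<Longrightarrow> C i = UNIV) \<Longrightarrow> constrained_law P C x n = alpha P x n"
  by (induction n) (auto simp: alpha_def dirac_def vmul_pow_Suc)

lemma constrained_law_killed:
  "constrained_law P (\<lambda>i. if s \<le> i then G else UNIV) x (s + k) = vmul_pow (alphaG P G x s) (KG P G) k"
proof (induction k)
  case 0
  show ?case
  proof (cases s)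
    case 0
    then show ?thesis
      by (auto simp: alphaG_def alpha_def dirac_def)
  next
    case (Suc m)
    then have "constrained_law P (\<lambda>i. if s \<le> i then G else UNIV) x m = alpha P x m"
      by (intro constrained_law_unconstrained) auto
    then show ?thesis
      using Suc by (auto simp: alphaG_def alpha_def vmul_pow_Suc)
  qed
next
  case (Suc k)
  then show ?case
    by (auto simp: vmul_pow_Suc vmul_KG vmul_pow_KG_outside)
qed

lemma path_prob_True: "markov_kernel P \<Longrightarrow> path_prob P x n (\<lambda>_. True) = 1"
  using path_prob_constrained[of P x n "\<lambda>_. UNIV"]
  by (simp add: constrained_law_unconstrained meas_alpha)

lemma path_prob_Not:
  "path_prob P x n (\<lambda>w. \<not> E w) = path_prob P x n (\<lambda>_. True) - path_prob P x n E"
proof -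
  have "{xs. length xs = n \<and> True}
      = {xs. length xs = n \<and> E (x # xs)} \<union> {xs. length xs = n \<and> \<not> E (x # xs)}"
    by auto
  then show ?thesis
    unfolding path_prob_def by (simp add: sum.union_disjoint finite_lists_length Collect_conj_eq[symmetric])
qed

lemma exit_prob_eq:
  assumes "markov_kernel P"
  shows "path_prob P x (s + L) (\<lambda>w. \<exists>u\<in>{0..L}. w ! (s + u) \<notin> G)
       = 1 - meas (vmul_pow (alphaG P G x s) (KG P G) L) UNIV"
proof -
  have "(\<lambda>w. \<not> (\<exists>u\<in>{0..L}. w ! (s + u) \<notin> G))
      = (\<lambda>w. \<forall>i\<le>s + L. w ! i \<in> (if s \<le> i then G else UNIV))"
    by (auto simp: fun_eq_iff) (metis add_le_cancel_left atLeastAtMost_iff le_add_diff_inverse zero_le)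
  then have "path_prob P x (s + L) (\<lambda>w. \<not> (\<exists>u\<in>{0..L}. w ! (s + u) \<notin> G))
      = meas (vmul_pow (alphaG P G x s) (KG P G) L) UNIV"
    by (simp add: path_prob_constrained constrained_law_killed)
  then show ?thesis
    using path_prob_Not[of P x "s + L" "\<lambda>w. \<not> (\<exists>u\<in>{0..L}. w ! (s + u) \<notin> G)"]
    by (simp add: path_prob_True[OF assms])
qed

lemma alpha_tilde_eq_poisson_mix:
  assumes "markov_kernel P"
  shows "alpha_tilde P x s t = poisson_mix t (\<lambda>k. alpha P x (s + k))"
proof -
  have "alpha_tilde P x s t = poisson_mix t (vmul_pow (alpha P x s) P)"
    unfolding alpha_tilde_def
  proof (rule vmul_exp_eq_poisson_mix)
    show "vmul (vmul_pow (alpha P x s) P n) (\<lambda>u v. if u = v then 1 else 0) = vmul_pow (alpha P x s) P n" for n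
      by (auto simp: vmul_def if_distrib cong: if_cong)
    show "\<bar>vmul_pow (alpha P x s) P k y\<bar> \<le> 1" for k y
      using assms by (simp add: vmul_pow_alpha alpha_nonneg alpha_le_1)
  qed
  moreover have "vmul_pow (alpha P x s) P = (\<lambda>k. alpha P x (s + k))"
    by (simp add: fun_eq_iff vmul_pow_alpha)
  ultimately show ?thesis
    by simp
qed

lemma lam_eq_poisson_mix:
  assumes "markov_kernel P"
  shows "lam P G x s t = poisson_mix t (vmul_pow (alphaG P G x s) (KG P G))"
  unfolding lam_def
proof (rule vmul_exp_eq_poisson_mix)
  show "vmul (vmul_pow (alphaG P G x s) (KG P G) n) (idG G) = vmul_pow (alphaG P G x s) (KG P G) n" for n
    by (intro vmul_idG vmul_pow_KG_outside)
  show "\<bar>vmul_pow (alphaG P G x s) (KG P G) k y\<bar> \<le> 1" for k y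
    using assms vmul_pow_KG_nonneg vmul_pow_KG_le_alpha alpha_le_1
    by (metis abs_of_nonneg order.trans)
qed

theorem lemma2p6:
  fixes P :: "'a::finite \<Rightarrow> 'a \<Rightarrow> real" and G :: "'a set" and x :: 'a
    and s L :: nat and t :: real
  assumes "markov_kernel P" and "1 \<le> L" and "0 \<le> t"
  shows "tv_dist (alpha_tilde P x s t) (lam P G x s t)
           \<le> path_prob P x (s + L) (\<lambda>w. \<exists>u\<in>{0..L}. w ! (s + u) \<notin> G) + poisson_tail t L
         \<and> 1 - meas (lam P G x s t) G
           \<le> path_prob P x (s + L) (\<lambda>w. \<exists>u\<in>{0..L}. w ! (s + u) \<notin> G) + poisson_tail t L"
proof -
  note P = assms(1)
  define D where "D = (\<lambda>k. alpha P x (s + k))"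
  define E where "E = vmul_pow (alphaG P G x s) (KG P G)"
  have E_nonneg: "0 \<le> E k y" and E_le_D: "E k y \<le> D k y" and meas_D: "meas (D k) UNIV = 1"
    and meas_E_decr: "meas (E (Suc k)) UNIV \<le> meas (E k) UNIV" for k y
    using P by (simp_all add: D_def E_def vmul_pow_KG_nonneg vmul_pow_KG_le_alpha meas_alpha
        meas_vmul_pow_Suc_le alphaG_nonneg KG_nonneg KG_row_sum_le)
  have mix: "alpha_tilde P x s t = poisson_mix t D" "lam P G x s t = poisson_mix t E"
    using alpha_tilde_eq_poisson_mix[OF P] lam_eq_poisson_mix[OF P] by (simp_all add: D_def E_def)
  have "meas (lam P G x s t) G = meas (lam P G x s t) UNIV"
    unfolding meas_def mix E_def poisson_mix_def
    by (rule sum.mono_neutral_left) (auto simp: vmul_pow_KG_outside)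
  moreover have "1 - meas (poisson_mix t E) UNIV
      \<le> path_prob P x (s + L) (\<lambda>w. \<exists>u\<in>{0..L}. w ! (s + u) \<notin> G) + poisson_tail t L"
    using poisson_mix_mass_deficit_le[where D = D and E = E,
        OF assms(3) E_nonneg E_le_D meas_D meas_E_decr]
    by (simp add: exit_prob_eq[OF P] E_def)
  ultimately show ?thesis
    using tv_dist_poisson_mix_dominated[where D = D and E = E, OF assms(3) E_nonneg E_le_D meas_D]
    by (simp add: mix)
qed

end
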